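(* Let $m=p_1^{\alpha_1}p_2^{\alpha_2}$, where $p_1,p_2>2$ are distinct primes and $\alpha_1,\alpha_2$ are positive integers. Let $t=\mathrm{ord}_m(2)$ and let $\gamma\in\mathbb{F}_{2^t}^*$ be a primitive $m$th root of unity. Then every $S_m$-decoding polynomial has at least $3$ monomials (i.e. at least 3 nonzero coefficients).
   Context: $\mathrm{ord}_m(2)$ is the multiplicative order of $2$ modulo $m$. The canonical set of $m$ is $S_m=\{s_{01},s_{10},s_{11}\}\subseteq\mathbb{Z}_m$, where for $\sigma=(\sigma_1,\sigma_2)\in\{0,1\}^2\setminus\{(0,0)\}$, $s_\sigma$ is the unique element of $\mathbb{Z}_m$ with $s_\sigma\equiv\sigma_1 \pmod{p_1^{\alpha_1}}$ and $s_\sigma\equiv \sigma_2\pmod{p_2^{\alpha_2}}$ (so $s_{11}=1$). An $S_m$-decoding polynomial is a polynomial $P(X)\in\mathbb{F}_{2^t}[X]$ such that $P(\gamma^s)=0$ for every $s\in S_m$ and $P(\gamma^0)=P(1)=1$. *)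

theory Defs
  imports "HOL-Computational_Algebra.Polynomial" "HOL-Number_Theory.Number_Theory"
begin

text \<open>The element s_sigma of Z_m (represented in {0..<q1*q2}) with
  s = e1 mod q1 and s = e2 mod q2, where q1 = p1^a1, q2 = p2^a2.\<close>
definition canon_elem :: "nat \<Rightarrow> nat \<Rightarrow> nat \<Rightarrow> nat \<Rightarrow> nat" where
  "canon_elem q1 q2 e1 e2 =
     (THE s. s < q1 * q2 \<and> [s = e1] (mod q1) \<and> [s = e2] (mod q2))"

definition canonical_set :: "nat \<Rightarrow> nat \<Rightarrow> nat set" where
  "canonical_set q1 q2 =
     {canon_elem q1 q2 0 1, canon_elem q1 q2 1 0, canon_elem q1 q2 1 1}"

definition decoding_poly :: "nat set \<Rightarrow> 'a::field \<Rightarrow> 'a poly \<Rightarrow> bool" where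
  "decoding_poly S \<gamma> P \<longleftrightarrow> (\<forall>s\<in>S. poly P (\<gamma> ^ s) = 0) \<and> poly P 1 = 1"

end

theory Submission
  imports Defs
begin

text \<open>Suppose P = a X^i + b X^j has at most two monomials. The ratio x = \<gamma>^j / \<gamma>^i
  satisfies x^s = -a/b at the three exponents s = 1, s_01, s_10, and s_01 + s_10 = 1 (mod m)
  turns this into (-a/b)^2 = -a/b, so a + b = 0, contradicting P(1) = 1.\<close>

lemma canon_elem_cong:
  assumes "coprime q1 q2" and "q1 \<noteq> 0" and "q2 \<noteq> 0"
  shows "[canon_elem q1 q2 e1 e2 = e1] (mod q1)" and "[canon_elem q1 q2 e1 e2 = e2] (mod q2)"
  using theI'[OF binary_chinese_remainder_unique_nat[OF assms, of e1 e2]]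
  unfolding canon_elem_def by auto

lemma canon_elem_1_1:
  assumes "coprime q1 q2" and "1 < q1 * q2"
  shows "canon_elem q1 q2 1 1 = 1"
proof -
  have "q1 \<noteq> 0" and "q2 \<noteq> 0" using assms(2) by (metis mult_0 mult_0_right not_less_zero)+
  with assms show ?thesis
    unfolding canon_elem_def
    by (intro the1_equality[OF binary_chinese_remainder_unique_nat]) auto
qed

lemma canon_elem_01_add_10:
  assumes "coprime q1 q2" and "q1 \<noteq> 0" and "q2 \<noteq> 0"
  shows "[canon_elem q1 q2 0 1 + canon_elem q1 q2 1 0 = 1] (mod q1 * q2)"
proof -
  have "[canon_elem q1 q2 0 1 + canon_elem q1 q2 1 0 = 0 + 1] (mod q1)"
    and "[canon_elem q1 q2 0 1 + canon_elem q1 q2 1 0 = 1 + 0] (mod q2)"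
    by (intro cong_add canon_elem_cong[OF assms])+
  with assms(1) show ?thesis by (simp add: coprime_cong_mult_nat)
qed

lemma power_eq_if_cong:
  fixes x :: "'a::monoid_mult"
  assumes "x ^ m = 1" and "[a = b] (mod m)"
  shows "x ^ a = x ^ b"
proof -
  have power_mod: "x ^ n = x ^ (n mod m)" for n
  proof -
    have "x ^ n = (x ^ m) ^ (n div m) * x ^ (n mod m)"
      by (metis div_mult_mod_eq mult.commute power_add power_mult)
    with assms(1) show ?thesis by simp
  qed
  show ?thesis using power_mod[of a] power_mod[of b] assms(2) by (simp add: cong_def)
qed

lemma binomial_zeros_sum_coeff_eq_0:
  fixes a b u v :: "'a::field"
  assumes "u \<noteq> 0" and "v \<noteq> 0" and "u ^ (r + s) = u" and "v ^ (r + s) = v"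
    and "a * u + b * v = 0" and "a * u ^ r + b * v ^ r = 0" and "a * u ^ s + b * v ^ s = 0"
  shows "a + b = 0"
proof (cases "b = 0")
  case True
  then show ?thesis using assms(1,5) by simp
next
  case False
  define x where "x = v / u"
  define c where "c = - a / b"
  have ratio_power: "x ^ k = c" if "a * u ^ k + b * v ^ k = 0" for k
    using that assms(1) False unfolding x_def c_def
    by (simp add: power_divide field_simps add_eq_0_iff)
  have "x = c" using ratio_power[of 1] assms(5) by simp
  moreover have "x ^ (r + s) = x" using assms(3,4) by (simp add: x_def power_divide)
  ultimately have "c * c = c"
    using ratio_power assms(6,7) by (metis power_add)
  moreover have "c \<noteq> 0" using \<open>x = c\<close> assms(1,2) unfolding x_def by (metis divide_eq_0_iff)
  ultimately have "c = 1" by simp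
  then have "- a = b" using False by (simp add: c_def field_simps)
  then show ?thesis by (metis right_minus)
qed

lemma subset_pair_if_card_le_2:
  fixes N :: "'a set"
  assumes "infinite (UNIV :: 'a set)" and "finite N" and "card N \<le> 2"
  obtains i j where "i \<noteq> j" and "N \<subseteq> {i, j}"
proof -
  have "infinite (UNIV - N)" using assms(1,2) by (simp add: Diff_infinite_finite)
  then obtain C where C: "C \<subseteq> UNIV - N" "finite C" "card C = 2 - card N"
    using infinite_arbitrarily_large by blast
  moreover have "N \<inter> C = {}" using C(1) by blast
  ultimately have "card (N \<union> C) = 2"
    using card_Un_disjoint[OF assms(2) C(2)] assms(3) by simp
  then show ?thesis using that by (auto simp: card_2_iff)
qed

lemma poly_eq_sum_over_coeff_support:
  fixes P :: "'a::comm_semiring_1 poly"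
  assumes "finite A" and "{k. Polynomial.coeff P k \<noteq> 0} \<subseteq> A"
  shows "poly P x = (\<Sum>k\<in>A. Polynomial.coeff P k * x ^ k)"
proof -
  have "poly P x = (\<Sum>k\<le>degree P. Polynomial.coeff P k * x ^ k)"
    by (rule poly_altdef)
  also have "\<dots> = (\<Sum>k\<in>{..degree P} \<union> A. Polynomial.coeff P k * x ^ k)"
    using assms(1) by (intro sum.mono_neutral_left) (auto intro: le_degree)
  also have "\<dots> = (\<Sum>k\<in>A. Polynomial.coeff P k * x ^ k)"
    using assms by (intro sum.mono_neutral_right) (auto simp: subset_eq, metis mult_zero_left)
  finally show ?thesis .
qed

lemma poly_1_eq_0_if_two_terms:
  fixes P :: "'a::field poly"
  assumes "card {k. Polynomial.coeff P k \<noteq> 0} \<le> 2"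
    and "\<gamma> \<noteq> 0" and "\<gamma> ^ (r + s) = \<gamma>"
    and "poly P \<gamma> = 0" and "poly P (\<gamma> ^ r) = 0" and "poly P (\<gamma> ^ s) = 0"
  shows "poly P 1 = 0"
proof -
  have "finite {k. Polynomial.coeff P k \<noteq> 0}"
    by (rule finite_subset[of _ "{..degree P}"]) (auto dest: le_degree)
  then obtain i j where "i \<noteq> j" and support: "{k. Polynomial.coeff P k \<noteq> 0} \<subseteq> {i, j}"
    using subset_pair_if_card_le_2 assms(1) by blast
  have two_terms: "poly P y = Polynomial.coeff P i * y ^ i + Polynomial.coeff P j * y ^ j" for y
    using poly_eq_sum_over_coeff_support[OF _ support] \<open>i \<noteq> j\<close> by simp
  have swap: "(\<gamma> ^ e) ^ k = (\<gamma> ^ k) ^ e" for e k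
    by (simp flip: power_mult add: mult.commute)
  have "Polynomial.coeff P i + Polynomial.coeff P j = 0"
  proof (rule binomial_zeros_sum_coeff_eq_0[where r = r and s = s])
    show "\<gamma> ^ i \<noteq> 0" and "\<gamma> ^ j \<noteq> 0" using assms(2) by auto
    show "(\<gamma> ^ i) ^ (r + s) = \<gamma> ^ i" and "(\<gamma> ^ j) ^ (r + s) = \<gamma> ^ j"
      using assms(3) swap by metis+
    show "Polynomial.coeff P i * \<gamma> ^ i + Polynomial.coeff P j * \<gamma> ^ j = 0"
      using assms(4) two_terms by simp
    show "Polynomial.coeff P i * (\<gamma> ^ i) ^ r + Polynomial.coeff P j * (\<gamma> ^ j) ^ r = 0"
      using assms(5) two_terms swap by metis
    show "Polynomial.coeff P i * (\<gamma> ^ i) ^ s + Polynomial.coeff P j * (\<gamma> ^ j) ^ s = 0"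
      using assms(6) two_terms swap by metis
  qed
  then show ?thesis using two_terms[of 1] by simp
qed

theorem lemma3:
  fixes p1 p2 a1 a2 m t :: nat and \<gamma> :: "'a::{field,finite}" and P :: "'a poly"
  assumes "prime p1" and "prime p2" and "p1 > 2" and "p2 > 2" and "p1 \<noteq> p2"
    and "a1 > 0" and "a2 > 0"
    and "m = p1 ^ a1 * p2 ^ a2"
    and "t = ord m 2"
    and "card (UNIV :: 'a set) = 2 ^ t"
    and "\<gamma> ^ m = 1" and "\<forall>k. 0 < k \<and> k < m \<longrightarrow> \<gamma> ^ k \<noteq> 1"
    and "decoding_poly (canonical_set (p1 ^ a1) (p2 ^ a2)) \<gamma> P"
  shows "card {i. Polynomial.coeff P i \<noteq> 0} \<ge> 3"
proof (rule ccontr)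
  assume "\<not> card {i. Polynomial.coeff P i \<noteq> 0} \<ge> 3"
  define s01 where "s01 = canon_elem (p1 ^ a1) (p2 ^ a2) 0 1"
  define s10 where "s10 = canon_elem (p1 ^ a1) (p2 ^ a2) 1 0"
  have coprime: "coprime (p1 ^ a1) (p2 ^ a2)" using assms(1,2,5) by (simp add: primes_coprime)
  have "p1 ^ a1 > 1" and "p2 ^ a2 > 1"
    using one_less_power[of p1 a1] one_less_power[of p2 a2] assms(3,4,6,7) by simp_all
  then have "m > 1" using assms(8) by (simp add: one_less_mult)
  have "\<gamma> \<noteq> 0" using assms(11) \<open>m > 1\<close> by (metis one_neq_zero power_0_left not_one_less_zero)
  have "[s01 + s10 = 1] (mod m)"
    unfolding s01_def s10_def assms(8)
    using assms(3,4) by (intro canon_elem_01_add_10[OF coprime]) simp_all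
  then have "\<gamma> ^ (s01 + s10) = \<gamma>" using power_eq_if_cong[OF assms(11)] by fastforce
  moreover have "canonical_set (p1 ^ a1) (p2 ^ a2) = {s01, s10, 1}"
    using canon_elem_1_1[OF coprime] \<open>m > 1\<close> assms(8)
    by (simp add: canonical_set_def s01_def s10_def)
  ultimately have "poly P 1 = 0"
    using assms(13) \<open>\<gamma> \<noteq> 0\<close> \<open>\<not> card _ \<ge> 3\<close>
    by (intro poly_1_eq_0_if_two_terms[where r = s01 and s = s10]) (auto simp: decoding_poly_def)
  with assms(13) show False by (simp add: decoding_poly_def)
qed

end
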